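(* Let $\mathcal{F}=\mathcal{F}(X)$ be the free group on an alphabet $X$, equipped with a bi-order $\prec$, and let $W\in\mathcal{F}$ be a cyclically reduced nonperiodic word. Then the maximal ascent of $W$ is uniquely positioned in $W$.
   Context: Words are over $X^*=X\cup X^{-1}$; a word $y_1\cdots y_n$ is reduced if $y_i\neq y_{i+1}^{-1}$ for all $i$, and cyclically reduced if moreover $y_1\neq y_n^{-1}$. Words are identified with the elements of $\mathcal{F}$ they represent; $1_\mathcal{F}$ is the empty word. A bi-order on $\mathcal{F}$ is a total order invariant under both left and right multiplication. $W$ is periodic if $W=U^k$ for some cyclically reduced word $U$ and some $k>1$; nonperiodic otherwise. A subword of $W$ is a word $V$ with $W=SVU$ and $|W|=|S|+|V|+|U|$; it is a prefix if $S$ is empty and a suffix if $U$ is empty. If $W=UV$ with $U$ a prefix, then $VU$ is a cyclic permutation of $W$. $R_W$ denotes the set of cyclic permutations of $W$ and of $W^{-1}$. A nontrivial reduced word $U$ is uniquely positioned in $W$ if $U$ is a prefix of exactly one element of $R_W$. A word $U$ is an ascent if every (nonempty) prefix and every (nonempty) suffix of $U$ (including $U$ itself) is $\succ 1_\mathcal{F}$. The maximal ascent of $W$ is the greatest (with respect to $\prec$) ascent among all subwords of elements of $R_W$. *)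

theory Defs
  imports Main "HOL-Library.Sublist"
begin

text \<open>Letters of the alphabet X* = X \<union> X^-1 over an alphabet type 'a:
  (x, False) is the generator x, (x, True) is its inverse.
  Elements of the free group F(X) are identified with reduced words.\<close>

type_synonym 'a letter = "'a \<times> bool"
type_synonym 'a word = "'a letter list"

definition inv_letter :: "'a letter \<Rightarrow> 'a letter" where
  "inv_letter l = (fst l, \<not> snd l)"

definition word_inv :: "'a word \<Rightarrow> 'a word" where
  "word_inv w = rev (map inv_letter w)"

definition reduced :: "'a word \<Rightarrow> bool" where
  "reduced w \<longleftrightarrow> (\<forall>i. Suc i < length w \<longrightarrow> w ! Suc i \<noteq> inv_letter (w ! i))"

definition cyclically_reduced :: "'a word \<Rightarrow> bool" where
  "cyclically_reduced w \<longleftrightarrow> reduced w \<and> (w \<noteq> [] \<longrightarrow> hd w \<noteq> inv_letter (last w))"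

fun red :: "'a word \<Rightarrow> 'a word" where
  "red [] = []"
| "red (x # w) = (case red w of [] \<Rightarrow> [x]
                   | y # v \<Rightarrow> (if y = inv_letter x then v else x # y # v))"

definition fmult :: "'a word \<Rightarrow> 'a word \<Rightarrow> 'a word" where
  "fmult u v = red (u @ v)"

text \<open>A bi-order on F(X), given by its strict part: a strict total order on the
  reduced words invariant under left and right multiplication.\<close>
definition bi_order :: "('a word \<Rightarrow> 'a word \<Rightarrow> bool) \<Rightarrow> bool" where
  "bi_order lt \<longleftrightarrow>
     (\<forall>a. reduced a \<longrightarrow> \<not> lt a a) \<and>
     (\<forall>a b c. reduced a \<longrightarrow> reduced b \<longrightarrow> reduced c \<longrightarrow> lt a b \<longrightarrow> lt b c \<longrightarrow> lt a c) \<and>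
     (\<forall>a b. reduced a \<longrightarrow> reduced b \<longrightarrow> a = b \<or> lt a b \<or> lt b a) \<and>
     (\<forall>a b c. reduced a \<longrightarrow> reduced b \<longrightarrow> reduced c \<longrightarrow> lt a b \<longrightarrow>
        lt (fmult c a) (fmult c b) \<and> lt (fmult a c) (fmult b c))"

definition periodic :: "'a word \<Rightarrow> bool" where
  "periodic W \<longleftrightarrow> (\<exists>U k. cyclically_reduced U \<and> k > 1 \<and> W = concat (replicate k U))"

definition cyc_perms :: "'a word \<Rightarrow> 'a word set" where
  "cyc_perms W = {V @ U | U V. W = U @ V}"

definition R_set :: "'a word \<Rightarrow> 'a word set" where
  "R_set W = cyc_perms W \<union> cyc_perms (word_inv W)"

definition subword :: "'a word \<Rightarrow> 'a word \<Rightarrow> bool" where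
  "subword V W \<longleftrightarrow> (\<exists>S U. W = S @ V @ U)"

definition uniquely_positioned :: "'a word \<Rightarrow> 'a word \<Rightarrow> bool" where
  "uniquely_positioned U W \<longleftrightarrow> U \<noteq> [] \<and> reduced U \<and>
     (\<exists>!V. V \<in> R_set W \<and> prefix U V)"

definition ascent :: "('a word \<Rightarrow> 'a word \<Rightarrow> bool) \<Rightarrow> 'a word \<Rightarrow> bool" where
  "ascent lt U \<longleftrightarrow>
     (\<forall>P. P \<noteq> [] \<longrightarrow> prefix P U \<longrightarrow> lt [] P) \<and>
     (\<forall>S. S \<noteq> [] \<longrightarrow> suffix S U \<longrightarrow> lt [] S)"

definition is_max_ascent :: "('a word \<Rightarrow> 'a word \<Rightarrow> bool) \<Rightarrow> 'a word \<Rightarrow> 'a word \<Rightarrow> bool" where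
  "is_max_ascent lt W M \<longleftrightarrow>
     (\<exists>V\<in>R_set W. subword M V) \<and> ascent lt M \<and>
     (\<forall>A. (\<exists>V\<in>R_set W. subword A V) \<longrightarrow> ascent lt A \<longrightarrow> A = M \<or> lt A M)"

end

theory Submission
  imports Defs
begin

text \<open>For \<open>V \<in> R_set W\<close> with prefixes \<open>p\<^sub>s = take s V\<close>, the word read along \<open>V\<close> from
  position \<open>i\<close> to position \<open>k\<close> is \<open>p\<^sub>i\<inverse> p\<^sub>k\<close>. If it is the maximal ascent \<open>M\<close>, then
  \<open>p\<^sub>i\<close> is the strictly least and \<open>p\<^sub>k\<close> the strictly greatest prefix of \<open>V\<close>: the segment from a
  least to a greatest prefix is an ascent occurring in \<open>V\<close> or \<open>V\<inverse>\<close>, and by bi-invariance it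
  exceeds \<open>p\<^sub>i\<inverse> p\<^sub>k\<close> unless it is the same segment. Hence \<open>M\<close> occupies a unique pair of
  positions in \<open>V\<close>, and all nonempty prefixes of the rest of \<open>V\<close> after \<open>M\<close> are negative.
  If \<open>M\<close> were a prefix of two different elements of \<open>R_set W\<close>, the two occurrences would either
  give two positions of \<open>M\<close> in one word, or overlap cyclically as \<open>M = Y G' Z = Z G Y\<close>, where
  \<open>G\<close>, \<open>G'\<close> have negative prefixes and \<open>Y\<close>, \<open>Z\<close> positive suffixes. Such an equation forces
  \<open>G = G'\<close>, and then a cyclic permutation of \<open>W\<close> is the product of two commuting words,
  so \<open>W\<close> is periodic.\<close>

section \<open>Words\<close>

lemma inv_letter_inv_letter [simp]: "inv_letter (inv_letter x) = x"
  by (simp add: inv_letter_def)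

lemma inv_letter_neq [simp]: "inv_letter x \<noteq> x"
  by (cases x) (simp add: inv_letter_def)

lemma word_inv_Nil [simp]: "word_inv [] = []"
  and word_inv_Cons [simp]: "word_inv (x # w) = word_inv w @ [inv_letter x]"
  and word_inv_append [simp]: "word_inv (u @ v) = word_inv v @ word_inv u"
  and word_inv_word_inv [simp]: "word_inv (word_inv w) = w"
  and length_word_inv [simp]: "length (word_inv w) = length w"
  by (simp_all add: word_inv_def rev_map comp_def)

lemma take_word_inv: "take j (word_inv w) = word_inv (drop (length w - j) w)"
  by (simp add: word_inv_def take_rev drop_map)

lemma subword_iff_sublist: "subword = sublist"
  by (simp add: fun_eq_iff subword_def sublist_def)

lemma prefix_eq_take: "prefix u v \<Longrightarrow> take (length u) v = u"
  by (auto simp: prefix_def)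

lemma take_prefix: "prefix u v \<Longrightarrow> k \<le> length u \<Longrightarrow> take k v = take k u"
  by (auto simp: prefix_def)

lemma sublist_word_inv: "sublist u w \<Longrightarrow> sublist (word_inv u) (word_inv w)"
  unfolding sublist_def by (metis append.assoc word_inv_append)

lemma reduced_Cons_iff:
  "reduced (x # w) \<longleftrightarrow> reduced w \<and> (w \<noteq> [] \<longrightarrow> hd w \<noteq> inv_letter x)"
  by (cases w) (auto simp: reduced_def nth_Cons split: nat.splits)

lemma reduced_Nil [simp]: "reduced []"
  by (simp add: reduced_def)

lemma reduced_singleton [simp]: "reduced [x]"
  by (simp add: reduced_Cons_iff)

lemma reduced_append:
  "reduced (u @ v) \<longleftrightarrow> reduced u \<and> reduced v \<and> (u \<noteq> [] \<longrightarrow> v \<noteq> [] \<longrightarrow> hd v \<noteq> inv_letter (last u))"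
  by (induction u) (auto simp: reduced_Cons_iff)

lemma reduced_sublist: "reduced w \<Longrightarrow> sublist u w \<Longrightarrow> reduced u"
  by (auto simp: sublist_def reduced_append)

lemma reduced_take: "reduced w \<Longrightarrow> reduced (take k w)"
  and reduced_drop: "reduced w \<Longrightarrow> reduced (drop k w)"
  using reduced_sublist by blast+

lemma reduced_word_inv: "reduced w \<Longrightarrow> reduced (word_inv w)"
proof (induction w)
  case (Cons x w)
  then show ?case
    by (cases w) (auto simp: reduced_append reduced_Cons_iff)
qed simp

lemma cyclically_reduced_iff: "cyclically_reduced w \<longleftrightarrow> reduced (w @ w)"
  unfolding cyclically_reduced_def reduced_append by auto

lemma word_inv_neq_self: "reduced w \<Longrightarrow> w \<noteq> [] \<Longrightarrow> word_inv w \<noteq> w"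
proof (induction "length w" arbitrary: w rule: less_induct)
  case less
  then obtain x u where w: "w = x # u"
    by (cases w) auto
  show ?case
  proof (cases u rule: rev_cases)
    case (snoc v y)
    show ?thesis
    proof
      assume "word_inv w = w"
      then have "y = inv_letter x" and v: "word_inv v = v"
        using w snoc by auto
      moreover have "reduced v"
        using less.prems(1) w snoc by (simp add: reduced_append reduced_Cons_iff)
      moreover have "v \<noteq> []"
        using less.prems(1) w snoc \<open>y = inv_letter x\<close> by (auto simp: reduced_Cons_iff)
      ultimately show False
        using less.hyps[of v] w snoc by simp
    qed
  qed (simp add: w)
qed

section \<open>Free reduction\<close>

lemma reduced_red: "reduced (red w)"
  by (induction w) (auto simp: reduced_Cons_iff split: list.split)

lemma red_reduced: "reduced w \<Longrightarrow> red w = w"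
proof (induction w)
  case (Cons x w)
  then show ?case
    by (cases w) (auto simp: reduced_Cons_iff)
qed simp

lemma red_Cons_inv_letter: "red (x # inv_letter x # w) = red w"
  using reduced_red[of w] by (cases "red w") (auto simp: reduced_Cons_iff split: list.split)

lemma red_append_red: "red (u @ red w) = red (u @ w)"
  by (induction u) (auto simp: red_reduced reduced_red)

lemma red_red_append: "red (red u @ w) = red (u @ w)"
proof (induction u)
  case (Cons x u)
  have "red (x # red u @ w) = red (red (x # u) @ w)"
  proof (cases "red u")
    case (Cons y v)
    show ?thesis
    proof (cases "y = inv_letter x")
      case True
      then show ?thesis
        using Cons red_Cons_inv_letter[of x "v @ w"] red_reduced[of v] reduced_red[of u]
        by (simp add: reduced_Cons_iff)
    next
      case False
      then show ?thesis
        using Cons by simp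
    qed
  qed simp
  then show ?case
    using Cons.IH red_append_red[of "[x]" "u @ w"] red_append_red[of "[x]" "red u @ w"] by simp
qed simp

lemma red_word_inv_append: "red (word_inv u @ u @ w) = red w"
proof (induction u arbitrary: w rule: rev_induct)
  case (snoc x u)
  have "red (word_inv (u @ [x]) @ (u @ [x]) @ w) = red (inv_letter x # red (word_inv u @ u @ x # w))"
    using red_append_red[of "[inv_letter x]"] by simp
  also have "\<dots> = red w"
    using snoc red_append_red[of "[inv_letter x]" "x # w"]
      red_Cons_inv_letter[of "inv_letter x" w] by simp
  finally show ?case .
qed simp

lemma red_append_word_inv: "red (u @ word_inv u @ w) = red w"
  using red_word_inv_append[of "word_inv u" w] by simp

lemma reduced_fmult: "reduced (fmult u v)"
  by (simp add: fmult_def reduced_red)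

lemma fmult_assoc: "fmult (fmult u v) w = fmult u (fmult v w)"
  by (simp add: fmult_def red_red_append red_append_red)

lemma fmult_Nil_left: "reduced v \<Longrightarrow> fmult [] v = v"
  and fmult_Nil_right: "reduced v \<Longrightarrow> fmult v [] = v"
  by (simp_all add: fmult_def red_reduced)

lemma fmult_word_inv_left: "fmult (word_inv u) u = []"
  and fmult_word_inv_right: "fmult u (word_inv u) = []"
  using red_word_inv_append[of u "[]"] red_append_word_inv[of u "[]"] by (simp_all add: fmult_def)

definition ldiv :: "'a word \<Rightarrow> 'a word \<Rightarrow> 'a word" where
  "ldiv u v = fmult (word_inv u) v"

lemma reduced_ldiv: "reduced (ldiv u v)"
  by (simp add: ldiv_def reduced_fmult)

lemma ldiv_append_right: "reduced v \<Longrightarrow> ldiv u (u @ v) = v"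
  by (simp add: ldiv_def fmult_def red_word_inv_append red_reduced)

lemma ldiv_append_left:
  assumes "reduced v"
  shows "ldiv (u @ v) u = word_inv v"
proof -
  have "ldiv (u @ v) u = red (word_inv v @ red (word_inv u @ u @ []))"
    by (simp add: ldiv_def fmult_def red_append_red)
  also have "\<dots> = word_inv v"
    using assms by (simp only: red_word_inv_append) (simp add: red_reduced reduced_word_inv)
  finally show ?thesis .
qed

section \<open>Bi-orders\<close>

lemma bi_order_converse: "bi_order lt \<Longrightarrow> bi_order (\<lambda>a b. lt b a)"
  unfolding bi_order_def by meson

locale bi_ordered =
  fixes lt :: "'a word \<Rightarrow> 'a word \<Rightarrow> bool" (infix \<open>\<prec>\<close> 50)
  assumes bi_order: "bi_order lt"
begin

lemma lt_irrefl: "reduced a \<Longrightarrow> \<not> a \<prec> a"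
  and lt_trans: "reduced a \<Longrightarrow> reduced b \<Longrightarrow> reduced c \<Longrightarrow> a \<prec> b \<Longrightarrow> b \<prec> c \<Longrightarrow> a \<prec> c"
  and lt_total: "reduced a \<Longrightarrow> reduced b \<Longrightarrow> a \<noteq> b \<Longrightarrow> a \<prec> b \<or> b \<prec> a"
  and lt_mult_left: "reduced a \<Longrightarrow> reduced b \<Longrightarrow> reduced c \<Longrightarrow> a \<prec> b \<Longrightarrow> fmult c a \<prec> fmult c b"
  and lt_mult_right: "reduced a \<Longrightarrow> reduced b \<Longrightarrow> reduced c \<Longrightarrow> a \<prec> b \<Longrightarrow> fmult a c \<prec> fmult b c"
  using bi_order unfolding bi_order_def by blast+

lemma lt_asym: "reduced a \<Longrightarrow> reduced b \<Longrightarrow> a \<prec> b \<Longrightarrow> \<not> b \<prec> a"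
  using lt_irrefl lt_trans by blast

lemma ldiv_pos: "reduced u \<Longrightarrow> reduced v \<Longrightarrow> u \<prec> v \<Longrightarrow> [] \<prec> ldiv u v"
  using lt_mult_left[of u v "word_inv u"] by (simp add: ldiv_def reduced_word_inv fmult_word_inv_left)

lemma ldiv_neg: "reduced u \<Longrightarrow> reduced v \<Longrightarrow> v \<prec> u \<Longrightarrow> ldiv u v \<prec> []"
  using lt_mult_left[of v u "word_inv u"] by (simp add: ldiv_def reduced_word_inv fmult_word_inv_left)

lemma word_inv_lt_word_inv: "reduced u \<Longrightarrow> reduced v \<Longrightarrow> u \<prec> v \<Longrightarrow> word_inv v \<prec> word_inv u"
  using lt_mult_right[OF _ _ _ ldiv_pos, of u v "word_inv v"]
  by (simp add: ldiv_def fmult_assoc fmult_word_inv_right fmult_Nil_left fmult_Nil_right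
      reduced_word_inv reduced_fmult)

lemma ldiv_strict_mono:
  assumes "reduced u" "reduced u'" "reduced v" "reduced v'"
    and "u' = u \<or> u' \<prec> u" and "v = v' \<or> v \<prec> v'" and "u' \<noteq> u \<or> v \<noteq> v'"
  shows "ldiv u v \<prec> ldiv u' v'"
proof -
  have left: "ldiv u v \<prec> ldiv u' v" if "u' \<prec> u"
    using lt_mult_right[OF _ _ _ word_inv_lt_word_inv[OF _ _ that]] assms
    by (simp add: ldiv_def reduced_word_inv)
  have right: "ldiv u' v \<prec> ldiv u' v'" if "v \<prec> v'"
    using lt_mult_left[OF _ _ _ that] assms by (simp add: ldiv_def reduced_word_inv)
  show ?thesis
    using assms left right lt_trans[OF reduced_ldiv reduced_ldiv reduced_ldiv] by blast
qed

lemma finite_has_greatest: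
  assumes "finite S" "S \<noteq> {}" "\<forall>a\<in>S. reduced a"
  shows "\<exists>m\<in>S. \<forall>a\<in>S. a \<noteq> m \<longrightarrow> a \<prec> m"
  using assms
proof (induction S rule: finite_ne_induct)
  case (insert x S)
  then obtain m where m: "m \<in> S" "\<forall>a\<in>S. a \<noteq> m \<longrightarrow> a \<prec> m"
    by auto
  show ?case
  proof (cases "x \<prec> m \<or> x = m")
    case True
    then show ?thesis
      using m by blast
  next
    case False
    then have "m \<prec> x"
      using lt_total insert.prems m(1) by blast
    then show ?thesis
      using m lt_trans insert.prems by (metis insert_iff)
  qed
qed simp

lemma finite_has_least:
  "finite S \<Longrightarrow> S \<noteq> {} \<Longrightarrow> \<forall>a\<in>S. reduced a \<Longrightarrow> \<exists>m\<in>S. \<forall>a\<in>S. a \<noteq> m \<longrightarrow> m \<prec> a"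
  using bi_ordered.finite_has_greatest[OF bi_ordered.intro, OF bi_order_converse[OF bi_order]] .

end

section \<open>Cyclic permutations\<close>

lemma mem_cyc_perms_iff: "V \<in> cyc_perms W \<longleftrightarrow> (\<exists>d. V = rotate d W)"
proof
  assume "V \<in> cyc_perms W"
  then obtain A B where "W = A @ B" "V = B @ A"
    unfolding cyc_perms_def by blast
  then have "V = rotate (length A) W"
    by (simp add: rotate_append)
  then show "\<exists>d. V = rotate d W" ..
next
  assume "\<exists>d. V = rotate d W"
  then obtain e where "V = drop e W @ take e W"
    using rotate_drop_take by blast
  moreover have "W = take e W @ drop e W"
    by simp
  ultimately show "V \<in> cyc_perms W"
    unfolding cyc_perms_def by blast
qed

lemma cyc_perms_subset: "V \<in> cyc_perms W \<Longrightarrow> cyc_perms V \<subseteq> cyc_perms W"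
proof
  fix X
  assume "V \<in> cyc_perms W" "X \<in> cyc_perms V"
  then obtain d e where "X = rotate d V" "V = rotate e W"
    unfolding mem_cyc_perms_iff by blast
  then have "X = rotate (d + e) W"
    by (simp add: rotate_rotate)
  then show "X \<in> cyc_perms W"
    unfolding mem_cyc_perms_iff by blast
qed

lemma cyc_perms_eq: "V \<in> cyc_perms W \<Longrightarrow> cyc_perms V = cyc_perms W"
  using cyc_perms_subset[of V W] cyc_perms_subset[of W V] unfolding cyc_perms_def by blast

lemma word_inv_mem_cyc_perms:
  assumes "V \<in> cyc_perms W"
  shows "word_inv V \<in> cyc_perms (word_inv W)"
proof -
  obtain A B where "W = A @ B" "V = B @ A"
    using assms unfolding cyc_perms_def by blast
  then have "word_inv W = word_inv B @ word_inv A" "word_inv V = word_inv A @ word_inv B"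
    by simp_all
  then show ?thesis
    unfolding cyc_perms_def by blast
qed

lemma cyc_perms_word_inv: "cyc_perms (word_inv W) = word_inv ` cyc_perms W"
proof
  show "cyc_perms (word_inv W) \<subseteq> word_inv ` cyc_perms W"
  proof
    fix X
    assume "X \<in> cyc_perms (word_inv W)"
    then have "word_inv (word_inv X) \<in> word_inv ` cyc_perms W"
      using word_inv_mem_cyc_perms[of X "word_inv W"] by (intro imageI) simp
    then show "X \<in> word_inv ` cyc_perms W"
      by simp
  qed
qed (auto intro: word_inv_mem_cyc_perms)

lemma R_set_altdef: "R_set W = cyc_perms W \<union> word_inv ` cyc_perms W"
  by (simp add: R_set_def cyc_perms_word_inv)

lemma mem_R_set_self: "W \<in> R_set W"
  unfolding R_set_def cyc_perms_def by blast

lemma R_set_word_inv: "R_set (word_inv W) = R_set W"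
  unfolding R_set_def by (metis Un_commute word_inv_word_inv)

lemma R_set_eq:
  assumes "V \<in> R_set W"
  shows "R_set V = R_set W"
proof -
  obtain U where "U \<in> cyc_perms W" and "V = U \<or> V = word_inv U"
    using assms unfolding R_set_altdef by blast
  moreover have "R_set U = R_set W"
    using cyc_perms_eq[OF \<open>U \<in> cyc_perms W\<close>] by (simp add: R_set_altdef)
  ultimately show ?thesis
    using R_set_word_inv by metis
qed

lemma word_inv_mem_R_set: "V \<in> R_set W \<Longrightarrow> word_inv V \<in> R_set W"
  using R_set_eq R_set_word_inv mem_R_set_self by metis

lemma rotate_mem_R_set: "V \<in> R_set W \<Longrightarrow> rotate d V \<in> R_set W"
  using R_set_eq[of V W] mem_cyc_perms_iff by (auto simp: R_set_def)

lemma mem_R_set_iff: "V \<in> R_set W \<longleftrightarrow> (\<exists>d. V = rotate d W \<or> V = word_inv (rotate d W))"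
proof -
  have "V \<in> word_inv ` cyc_perms W \<longleftrightarrow> word_inv V \<in> cyc_perms W"
  proof
    assume "word_inv V \<in> cyc_perms W"
    then have "word_inv (word_inv V) \<in> word_inv ` cyc_perms W"
      by (rule imageI)
    then show "V \<in> word_inv ` cyc_perms W"
      by simp
  next
    assume "V \<in> word_inv ` cyc_perms W"
    then obtain U where "U \<in> cyc_perms W" "V = word_inv U"
      by blast
    then show "word_inv V \<in> cyc_perms W"
      by simp
  qed
  moreover have "word_inv V = U \<longleftrightarrow> V = word_inv U" for U
    by auto
  ultimately show ?thesis
    unfolding R_set_altdef Un_iff mem_cyc_perms_iff by blast
qed

lemma finite_R_set: "finite (R_set W)"
proof -
  have "cyc_perms W \<subseteq> {V. set V \<subseteq> set W \<and> length V = length W}"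
    by (auto simp: mem_cyc_perms_iff)
  then have "finite (cyc_perms W)"
    using finite_lists_length_eq[of "set W"] finite_subset by blast
  then show ?thesis
    by (simp add: R_set_altdef)
qed

lemma cyclically_reduced_rotate: "cyclically_reduced W \<Longrightarrow> cyclically_reduced (rotate d W)"
proof -
  assume "cyclically_reduced W"
  obtain A B where W: "W = A @ B" and rot: "rotate d W = B @ A"
    using mem_cyc_perms_iff[of "rotate d W" W] unfolding cyc_perms_def by blast
  have "reduced (W @ W @ W)"
    using \<open>cyclically_reduced W\<close> by (cases "W = []") (auto simp: cyclically_reduced_iff reduced_append)
  moreover have "sublist (B @ A @ B @ A) (W @ W @ W)"
    unfolding W sublist_def by (metis append.assoc)
  ultimately show ?thesis
    using reduced_sublist by (simp add: cyclically_reduced_iff rot)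
qed

lemma cyclically_reduced_word_inv: "cyclically_reduced W \<Longrightarrow> cyclically_reduced (word_inv W)"
  using reduced_word_inv[of "W @ W"] by (simp add: cyclically_reduced_iff)

lemma cyclically_reduced_R_set: "cyclically_reduced W \<Longrightarrow> V \<in> R_set W \<Longrightarrow> cyclically_reduced V"
  by (auto simp: mem_R_set_iff cyclically_reduced_rotate cyclically_reduced_word_inv)

lemma reduced_R_set: "cyclically_reduced W \<Longrightarrow> V \<in> R_set W \<Longrightarrow> reduced V"
  using cyclically_reduced_R_set cyclically_reduced_def by blast

section \<open>Periodicity\<close>

lemma power_append_root: "concat (replicate k U) @ U = U @ concat (replicate k U)"
  by (induction k) auto

lemma cyclically_reduced_power_root:
  assumes "cyclically_reduced (concat (replicate k U))" and "0 < k"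
  shows "cyclically_reduced U"
proof -
  obtain j where "k = Suc j"
    using \<open>0 < k\<close> gr0_implies_Suc by blast
  then have "concat (replicate k U) @ concat (replicate k U) = (U @ U) @ concat (replicate j U @ replicate j U)"
    by (simp add: power_append_root)
  with assms(1) show ?thesis
    by (simp add: cyclically_reduced_iff reduced_append del: concat_append)
qed

lemma rotate1_power: "rotate1 (concat (replicate k U)) = concat (replicate k (rotate1 U))"
proof (cases U)
  case (Cons x U')
  have "concat (replicate k (x # U')) @ [x] = x # concat (replicate k (U' @ [x]))"
    by (induction k) auto
  then show ?thesis
    using Cons by (cases k) auto
qed simp

lemma rotate_power: "rotate d (concat (replicate k U)) = concat (replicate k (rotate d U))"
  by (induction d) (auto simp: rotate1_power)

lemma word_inv_power: "word_inv (concat (replicate k U)) = concat (replicate k (word_inv U))"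
  by (induction k) (auto simp: power_append_root)

lemma periodic_R_set:
  assumes "cyclically_reduced W" "V \<in> R_set W" "periodic V"
  shows "periodic W"
proof -
  obtain U k where V: "V = concat (replicate k U)" and "k > 1"
    using \<open>periodic V\<close> unfolding periodic_def by blast
  obtain d where "W = rotate d V \<or> W = word_inv (rotate d V)"
    using R_set_eq[OF assms(2)] mem_R_set_self mem_R_set_iff by metis
  then obtain U' where W: "W = concat (replicate k U')"
    unfolding V rotate_power word_inv_power by blast
  then show ?thesis
    using assms(1) \<open>k > 1\<close> cyclically_reduced_power_root[of k U'] unfolding periodic_def by auto
qed

lemma periodic_Nil: "periodic []"
  unfolding periodic_def cyclically_reduced_def by (intro exI[of _ "[]"] exI[of _ "2::nat"]) simp

lemma periodic_if_commute:
  assumes "cyclically_reduced (X @ Y)" "X @ Y = Y @ X" "X \<noteq> []" "Y \<noteq> []"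
  shows "periodic (X @ Y)"
  using comm_append_is_replicate[OF assms(3,4,2)] assms(1) cyclically_reduced_power_root
  unfolding periodic_def by (metis gr_implies_not0 neq0_conv)

section \<open>Segments of a word\<close>

definition segment :: "'a word \<Rightarrow> nat \<Rightarrow> nat \<Rightarrow> 'a word" where
  "segment V i k = ldiv (take i V) (take k V)"

lemma drop_take_split: "i \<le> s \<Longrightarrow> s \<le> k \<Longrightarrow> drop i (take k xs) = drop i (take s xs) @ drop s (take k xs)"
proof -
  assume "i \<le> s" "s \<le> k"
  then have "take k xs = take s xs @ drop s (take k xs)"
    by (metis append_take_drop_id min.absorb1 take_take)
  then have "drop i (take k xs) = drop i (take s xs) @ drop (i - length (take s xs)) (drop s (take k xs))"
    by (metis drop_append)
  then show ?thesis
    using \<open>i \<le> s\<close> by (cases "i \<le> length (take s xs)") auto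
qed

lemma reduced_segment: "reduced (segment V i k)"
  by (simp add: segment_def reduced_ldiv)

lemma segment_forward: "reduced V \<Longrightarrow> i \<le> k \<Longrightarrow> segment V i k = drop i (take k V)"
  using drop_take_split[of 0 i k V] ldiv_append_right[of "drop i (take k V)" "take i V"]
  by (simp add: segment_def reduced_drop reduced_take)

lemma segment_backward: "reduced V \<Longrightarrow> k \<le> i \<Longrightarrow> segment V i k = word_inv (drop k (take i V))"
  using drop_take_split[of 0 k i V] ldiv_append_left[of "drop k (take i V)" "take k V"]
  by (simp add: segment_def reduced_drop reduced_take)

lemma segment_split:
  assumes "reduced V" and "s \<in> {min i k..max i k}"
  shows "segment V i k = segment V i s @ segment V s k"
proof (cases "i \<le> k")
  case True
  then show ?thesis
    using assms drop_take_split[of i s k V] by (simp add: segment_forward)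
next
  case False
  then show ?thesis
    using assms drop_take_split[of k s i V] by (simp add: segment_backward)
qed

lemma length_segment:
  "reduced V \<Longrightarrow> i \<le> length V \<Longrightarrow> k \<le> length V \<Longrightarrow>
    length (segment V i k) = (if i \<le> k then k - i else i - k)"
  by (simp add: segment_forward segment_backward)

lemma sublist_segment: "reduced V \<Longrightarrow> sublist (segment V i k) V \<or> sublist (segment V i k) (word_inv V)"
  by (cases "i \<le> k")
    (auto simp: segment_forward segment_backward intro!: sublist_word_inv sublist_order.order.trans[OF sublist_drop])

lemma take_eq_take_iff: "s \<le> length V \<Longrightarrow> t \<le> length V \<Longrightarrow> take s V = take t V \<longleftrightarrow> s = t"
  by (metis length_take min.absorb2)

context bi_ordered
begin

definition prefixes_negative :: "'a word \<Rightarrow> bool" where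
  "prefixes_negative G \<longleftrightarrow> (\<forall>P. P \<noteq> [] \<longrightarrow> prefix P G \<longrightarrow> P \<prec> [])"

definition suffixes_positive :: "'a word \<Rightarrow> bool" where
  "suffixes_positive X \<longleftrightarrow> (\<forall>S. S \<noteq> [] \<longrightarrow> suffix S X \<longrightarrow> [] \<prec> S)"

lemma suffixes_positive_ascent: "ascent lt A \<Longrightarrow> suffixes_positive A"
  unfolding ascent_def suffixes_positive_def by blast

lemma suffixes_positive_suffix: "suffixes_positive A \<Longrightarrow> suffix X A \<Longrightarrow> suffixes_positive X"
  unfolding suffixes_positive_def by (meson suffix_order.trans)

lemma suffixes_positive_prefixes_negative_overlap:
  assumes "suffixes_positive X" "prefixes_negative G" "reduced G" "suffix P X" "prefix P G"
  shows "P = []"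
proof (rule ccontr)
  assume "P \<noteq> []"
  then have "[] \<prec> P" "P \<prec> []"
    using assms unfolding suffixes_positive_def prefixes_negative_def by blast+
  moreover have "reduced P"
    using \<open>reduced G\<close> \<open>prefix P G\<close> reduced_sublist prefix_imp_sublist by blast
  ultimately show False
    using lt_asym reduced_Nil by blast
qed

lemma exists_least_prefix:
  assumes "reduced V"
  obtains a where "a \<le> length V" "\<And>s. s \<le> length V \<Longrightarrow> s \<noteq> a \<Longrightarrow> take a V \<prec> take s V"
proof -
  obtain a where "a \<le> length V" "\<forall>s\<le>length V. take s V \<noteq> take a V \<longrightarrow> take a V \<prec> take s V"
    using finite_has_least[of "(\<lambda>s. take s V) ` {..length V}"] assms by (auto simp: reduced_take)
  then show ?thesis
    using that take_eq_take_iff by blast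
qed

lemma exists_greatest_prefix:
  assumes "reduced V"
  obtains b where "b \<le> length V" "\<And>s. s \<le> length V \<Longrightarrow> s \<noteq> b \<Longrightarrow> take s V \<prec> take b V"
proof -
  obtain b where "b \<le> length V" "\<forall>s\<le>length V. take s V \<noteq> take b V \<longrightarrow> take s V \<prec> take b V"
    using finite_has_greatest[of "(\<lambda>s. take s V) ` {..length V}"] assms by (auto simp: reduced_take)
  then show ?thesis
    using that take_eq_take_iff by blast
qed

lemma ascent_segment:
  assumes V: "reduced V" "i \<le> length V" "k \<le> length V"
    and least: "\<And>s. s \<in> {min i k..max i k} \<Longrightarrow> s \<noteq> i \<Longrightarrow> take i V \<prec> take s V"
    and greatest: "\<And>s. s \<in> {min i k..max i k} \<Longrightarrow> s \<noteq> k \<Longrightarrow> take s V \<prec> take k V"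
  shows "ascent lt (segment V i k)"
  unfolding ascent_def
proof (intro conjI allI impI)
  fix P
  assume "P \<noteq> []" "prefix P (segment V i k)"
  define s where "s = (if i \<le> k then i + length P else i - length P)"
  have "0 < length P" "length P \<le> length (segment V i k)"
    using \<open>P \<noteq> []\<close> \<open>prefix P (segment V i k)\<close> by (simp_all add: prefix_length_le)
  then have s: "s \<in> {min i k..max i k}" "s \<noteq> i" "length (segment V i s) = length P"
    using \<open>P \<noteq> []\<close> V by (auto simp: s_def length_segment simp del: length_greater_0_conv split: if_splits)
  then have "P = segment V i s"
    using \<open>prefix P (segment V i k)\<close> segment_split[OF V(1) s(1)]
    by (metis append_eq_conv_conj prefix_def)
  then show "[] \<prec> P"
    using ldiv_pos[OF reduced_take reduced_take least[OF s(1,2)]] V(1) by (simp add: segment_def)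
next
  fix S
  assume "S \<noteq> []" "suffix S (segment V i k)"
  define s where "s = (if i \<le> k then k - length S else k + length S)"
  have "0 < length S" "length S \<le> length (segment V i k)"
    using \<open>S \<noteq> []\<close> \<open>suffix S (segment V i k)\<close> by (simp_all add: suffix_length_le)
  then have s: "s \<in> {min i k..max i k}" "s \<noteq> k" "length (segment V s k) = length S"
    using \<open>S \<noteq> []\<close> V by (auto simp: s_def length_segment simp del: length_greater_0_conv split: if_splits)
  then have "S = segment V s k"
    using \<open>suffix S (segment V i k)\<close> segment_split[OF V(1) s(1)]
    by (metis append_eq_append_conv suffix_def)
  then show "[] \<prec> S"
    using ldiv_pos[OF reduced_take reduced_take greatest[OF s(1,2)]] V(1) by (simp add: segment_def)
qed

lemma word_equation_shorten:
  assumes eq: "Y @ G' @ X = X @ G @ Y" and "length Y \<le> length X" "G' \<noteq> []"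
    and "reduced G'" "prefixes_negative G'" "suffixes_positive X"
  shows "G = G' \<or> (\<exists>X'. length X' < length X \<and> suffix X' X \<and> Y @ G' @ X' = X' @ G @ Y)"
proof -
  obtain us where X: "X = Y @ us" and eq': "G' @ X = us @ G @ Y"
  proof -
    obtain us where "Y = X @ us \<and> us @ G' @ X = G @ Y \<or> Y @ us = X \<and> G' @ X = us @ G @ Y"
      using append_eq_append_conv2[THEN iffD1, OF eq] by blast
    then show ?thesis
      using that[of us] that[of "[]"] \<open>length Y \<le> length X\<close> by auto
  qed
  obtain vs where "G' = us @ vs \<and> vs @ X = G @ Y \<or> G' @ vs = us \<and> X = vs @ G @ Y"
    using append_eq_append_conv2[THEN iffD1, OF eq'] by blast
  then show ?thesis
  proof (elim disjE conjE)
    assume "G' = us @ vs"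
    then have "suffix us X" "prefix us G'"
      using X by (auto simp: suffix_def prefix_def)
    then have "us = []"
      using suffixes_positive_prefixes_negative_overlap assms(4-6) by blast
    then show ?thesis
      using eq' X by simp
  next
    assume "G' @ vs = us"
    then have X': "X = Y @ G' @ vs" and "Y @ G' @ vs = vs @ G @ Y"
      using eq X by auto
    moreover have "length vs < length X"
      using X' \<open>G' \<noteq> []\<close> by simp
    moreover have "suffix vs X"
      using X' by (auto intro: suffixI[of _ "Y @ G'"])
    ultimately show ?thesis
      by blast
  qed
qed

text \<open>\<open>G\<close> and \<open>G'\<close> stay fixed while the equation is shortened as in the Euclidean algorithm.\<close>

lemma word_equation_gaps_eq:
  assumes "Y @ G' @ X = X @ G @ Y" "length G = length G'" "reduced G" "reduced G'"
    "prefixes_negative G" "prefixes_negative G'" "suffixes_positive X" "suffixes_positive Y"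
  shows "G = G'"
  using assms(1,7,8)
proof (induction "length X + length Y" arbitrary: X Y rule: less_induct)
  case less
  show ?case
  proof (cases "G = []")
    case False
    with assms(2) have "G' \<noteq> []"
      by auto
    consider "length Y \<le> length X" | "length X \<le> length Y"
      by linarith
    then show ?thesis
    proof cases
      case 1
      have "G = G' \<or> (\<exists>X'. length X' < length X \<and> suffix X' X \<and> Y @ G' @ X' = X' @ G @ Y)"
        by (rule word_equation_shorten[OF less.prems(1) 1 \<open>G' \<noteq> []\<close> assms(4,6) less.prems(2)])
      then show ?thesis
      proof
        assume "\<exists>X'. length X' < length X \<and> suffix X' X \<and> Y @ G' @ X' = X' @ G @ Y"
        then obtain X' where "length X' < length X" "suffix X' X" "Y @ G' @ X' = X' @ G @ Y"
          by blast
        then show ?thesis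
          using less.hyps[of X' Y] suffixes_positive_suffix[OF less.prems(2)] less.prems(3) by simp
      qed
    next
      case 2
      have "G' = G \<or> (\<exists>Y'. length Y' < length Y \<and> suffix Y' Y \<and> X @ G @ Y' = Y' @ G' @ X)"
        by (rule word_equation_shorten[OF less.prems(1)[symmetric] 2 \<open>G \<noteq> []\<close> assms(3,5) less.prems(3)])
      then show ?thesis
      proof
        assume "\<exists>Y'. length Y' < length Y \<and> suffix Y' Y \<and> X @ G @ Y' = Y' @ G' @ X"
        then obtain Y' where "length Y' < length Y" "suffix Y' Y" "Y' @ G' @ X = X @ G @ Y'"
          by auto
        then show ?thesis
          using less.hyps[of X Y'] suffixes_positive_suffix[OF less.prems(3)] less.prems(2) by simp
      qed simp
    qed
  qed (use assms(2) in simp)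
qed

end

section \<open>Maximal ascents\<close>

context bi_ordered
begin

lemma ascent_Nil: "ascent lt []"
  by (simp add: ascent_def)

lemma ascent_singleton: "[] \<prec> [x] \<Longrightarrow> ascent lt [x]"
  unfolding ascent_def by (auto simp: prefix_Cons suffix_def Cons_eq_append_conv)

lemma max_ascent_exists:
  assumes "cyclically_reduced W"
  shows "\<exists>M. is_max_ascent lt W M"
proof -
  define S where "S = {A. (\<exists>V\<in>R_set W. sublist A V) \<and> ascent lt A}"
  have "S \<subseteq> (\<Union>V\<in>R_set W. set (sublists V))"
    by (auto simp: S_def)
  then have "finite S"
    using finite_R_set finite_subset by blast
  moreover have "[] \<in> S"
    using mem_R_set_self ascent_Nil by (auto simp: S_def)
  moreover have "\<forall>A\<in>S. reduced A"
    using reduced_R_set[OF assms] reduced_sublist by (auto simp: S_def)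
  ultimately obtain M where "M \<in> S" "\<forall>A\<in>S. A \<noteq> M \<longrightarrow> A \<prec> M"
    using finite_has_greatest by blast
  then have "is_max_ascent lt W M"
    unfolding is_max_ascent_def subword_iff_sublist S_def by blast
  then show ?thesis ..
qed

end

locale max_ascent = bi_ordered +
  fixes W M :: "'a word"
  assumes cyclically_reduced_W: "cyclically_reduced W"
    and is_max_ascent_M: "is_max_ascent lt W M"
begin

lemma reduced_R_set_W: "V \<in> R_set W \<Longrightarrow> reduced V"
  using reduced_R_set cyclically_reduced_W by blast

lemma ascent_le_max_ascent: "V \<in> R_set W \<Longrightarrow> sublist A V \<Longrightarrow> ascent lt A \<Longrightarrow> A = M \<or> A \<prec> M"
  using is_max_ascent_M unfolding is_max_ascent_def subword_iff_sublist by blast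

lemma reduced_max_ascent: "reduced M"
  using is_max_ascent_M reduced_R_set_W reduced_sublist unfolding is_max_ascent_def subword_iff_sublist
  by blast

text \<open>If either prefix were not extremal, the segment from a least to a greatest prefix of \<open>V\<close>
  would be a larger ascent.\<close>

lemma segment_eq_max_ascent_extremal:
  assumes V: "V \<in> R_set W" and ik: "i \<le> length V" "k \<le> length V" and seg: "segment V i k = M"
  shows "\<forall>s\<le>length V. s \<noteq> i \<longrightarrow> take i V \<prec> take s V"
    and "\<forall>s\<le>length V. s \<noteq> k \<longrightarrow> take s V \<prec> take k V"
proof -
  have rV: "reduced V"
    using V by (rule reduced_R_set_W)
  obtain a where a: "a \<le> length V" "\<And>s. s \<le> length V \<Longrightarrow> s \<noteq> a \<Longrightarrow> take a V \<prec> take s V"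
    using exists_least_prefix[OF rV] by blast
  obtain b where b: "b \<le> length V" "\<And>s. s \<le> length V \<Longrightarrow> s \<noteq> b \<Longrightarrow> take s V \<prec> take b V"
    using exists_greatest_prefix[OF rV] by blast
  have "ascent lt (segment V a b)"
    by (rule ascent_segment[OF rV a(1) b(1)]) (use a b in auto)
  moreover have "\<exists>V'\<in>R_set W. sublist (segment V a b) V'"
    using sublist_segment[OF rV] V word_inv_mem_R_set by blast
  ultimately have le: "segment V a b = M \<or> segment V a b \<prec> M"
    using ascent_le_max_ascent by blast
  have "a = i \<and> b = k"
  proof (rule ccontr)
    assume "\<not> (a = i \<and> b = k)"
    then have "take a V \<noteq> take i V \<or> take k V \<noteq> take b V"
      using take_eq_take_iff a(1) b(1) ik by metis
    moreover have "take a V = take i V \<or> take a V \<prec> take i V" "take k V = take b V \<or> take k V \<prec> take b V"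
      using a(2)[OF ik(1)] b(2)[OF ik(2)] by blast+
    ultimately have "M \<prec> segment V a b"
      using ldiv_strict_mono[OF reduced_take reduced_take reduced_take reduced_take] rV seg
      unfolding segment_def by blast
    then show False
      using le lt_asym lt_irrefl reduced_max_ascent reduced_segment by blast
  qed
  then show "\<forall>s\<le>length V. s \<noteq> i \<longrightarrow> take i V \<prec> take s V"
    and "\<forall>s\<le>length V. s \<noteq> k \<longrightarrow> take s V \<prec> take k V"
    using a b by blast+
qed

lemma segment_prefix_max_ascent: "V \<in> R_set W \<Longrightarrow> prefix M V \<Longrightarrow> segment V 0 (length M) = M"
  using reduced_R_set_W by (simp add: segment_forward prefix_eq_take)

lemma max_ascent_segment_unique:
  assumes V: "V \<in> R_set W" "prefix M V" and ik: "i \<le> length V" "k \<le> length V" "segment V i k = M"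
  shows "i = 0 \<and> k = length M"
proof -
  have m: "length M \<le> length V"
    using V(2) by (rule prefix_length_le)
  note ext0 = segment_eq_max_ascent_extremal[OF V(1) _ m segment_prefix_max_ascent[OF V]]
  note ext = segment_eq_max_ascent_extremal[OF V(1) ik]
  have rV: "reduced V"
    using V(1) by (rule reduced_R_set_W)
  have "i = 0"
  proof (rule ccontr)
    assume "i \<noteq> 0"
    then have "take 0 V \<prec> take i V" "take i V \<prec> take 0 V"
      using ext0(1)[rule_format, of i] ext(1)[rule_format, of 0] ik by simp_all
    then show False
      using lt_asym reduced_take[OF rV] by blast
  qed
  moreover have "k = length M"
  proof (rule ccontr)
    assume "k \<noteq> length M"
    then have "take k V \<prec> take (length M) V" "take (length M) V \<prec> take k V"
      using ext0(2)[rule_format, of k] ext(2)[rule_format, of "length M"] ik m by simp_all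
    then show False
      using lt_asym reduced_take[OF rV] by blast
  qed
  ultimately show ?thesis ..
qed

lemma prefixes_negative_after_max_ascent:
  assumes V: "V \<in> R_set W" "prefix M V"
  shows "prefixes_negative (drop (length M) V)"
  unfolding prefixes_negative_def
proof (intro allI impI)
  fix P
  assume P: "P \<noteq> []" "prefix P (drop (length M) V)"
  define m where "m = length M"
  have len: "0 < length P" "m + length P \<le> length V"
    using P prefix_length_le[OF P(2)] prefix_length_le[OF V(2)] by (auto simp: m_def)
  have rV: "reduced V"
    using V(1) by (rule reduced_R_set_W)
  have "P = drop m (take (m + length P) V)"
    using prefix_eq_take[OF P(2)] by (simp add: take_drop m_def add.commute)
  then have "P = segment V m (m + length P)"
    using rV by (simp add: segment_forward)
  moreover have "take (m + length P) V \<prec> take m V"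
    using segment_eq_max_ascent_extremal(2)[OF V(1) _ _ segment_prefix_max_ascent[OF V]] len
    by (simp add: m_def)
  then have "segment V m (m + length P) \<prec> []"
    unfolding segment_def by (rule ldiv_neg[OF reduced_take[OF rV] reduced_take[OF rV]])
  ultimately show "P \<prec> []"
    by simp
qed

lemma rotation_prefix_max_ascent_trivial:
  assumes V: "V \<in> R_set W" "prefix M V"
    and rot: "prefix M (drop d V @ take d V)" and d: "d + length M \<le> length V"
  shows "d = 0"
proof -
  have "segment V d (d + length M) = take (length M) (drop d V)"
    using reduced_R_set_W[OF V(1)] by (simp add: segment_forward take_drop add.commute)
  also have "\<dots> = take (length M) (drop d V @ take d V)"
    using d by simp
  also have "\<dots> = M"
    using rot by (rule prefix_eq_take)
  finally have "segment V d (d + length M) = M" .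
  moreover have "d \<le> length V" "d + length M \<le> length V"
    using d by simp_all
  ultimately show "d = 0"
    using max_ascent_segment_unique[OF V] by blast
qed

lemma rotation_overlap_periodic:
  assumes V: "V \<in> R_set W" "prefix M V"
    and rot: "prefix M (drop d V @ take d V)" and d: "d < length M" "length V < d + length M"
  shows "periodic W"
proof -
  define n m where "n = length V" and "m = length M"
  have mn: "m \<le> n" "d < m" "n < d + m"
    using prefix_length_le[OF V(2)] d by (simp_all add: m_def n_def)
  define Y G' Z G where "Y = take (m + d - n) V" and "G' = drop (m + d - n) (take d V)"
    and "Z = drop d (take m V)" and "G = drop m V"
  have "take (m + d - n) (take d V) = Y"
    using mn by (simp add: Y_def min_def)
  then have take_d: "take d V = Y @ G'"
    using append_take_drop_id[of "m + d - n" "take d V"] by (simp add: G'_def)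
  have "take d (take m V) = take d V"
    using mn by simp
  then have take_m: "take m V = take d V @ Z"
    using append_take_drop_id[of d "take m V"] by (simp add: Z_def)
  have lengths: "length Y = m + d - n" "length G' = n - m" "length Z = m - d" "length G = n - m"
    using mn by (simp_all add: Y_def G'_def Z_def G_def n_def)
  have M1: "M = Y @ G' @ Z"
    using prefix_eq_take[OF V(2)] take_m take_d by (simp add: m_def)
  have V_eq: "V = Y @ G' @ Z @ G"
    using append_take_drop_id[of m V] by (simp only: take_m take_d G_def append.assoc)
  have "d = length Y + length G'"
    using lengths mn by simp
  then have rot_eq: "drop d V @ take d V = Z @ G @ Y @ G'"
    unfolding V_eq by simp
  have m_eq: "m = length (Z @ G @ Y)"
    using lengths mn by simp
  have "M = take m (Z @ G @ Y @ G')"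
    using prefix_eq_take[OF rot] by (simp add: rot_eq m_def)
  then have M2: "M = Z @ G @ Y"
    using m_eq by simp
  have rot_R: "drop d V @ take d V \<in> R_set W"
    using rotate_mem_R_set[OF V(1), of d] mn by (simp add: rotate_drop_take n_def)
  have "ascent lt M"
    using is_max_ascent_M by (simp add: is_max_ascent_def)
  moreover have "suffix Z M" "suffix Y M"
    using M1 M2 suffixI append.assoc by metis+
  ultimately have "suffixes_positive Z" "suffixes_positive Y"
    using suffixes_positive_suffix suffixes_positive_ascent by blast+
  moreover have "prefixes_negative G"
    using prefixes_negative_after_max_ascent[OF V] by (simp add: G_def m_def)
  moreover have "prefixes_negative G'"
    using prefixes_negative_after_max_ascent[OF rot_R rot] m_eq by (simp add: rot_eq m_def[symmetric])
  moreover have "reduced G" "reduced G'"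
    using reduced_R_set_W[OF V(1)] unfolding V_eq by (simp_all add: reduced_append)
  ultimately have "G = G'"
    using word_equation_gaps_eq[of Y G' Z G] M1 M2 lengths by simp
  then have comm: "(Y @ G) @ (Z @ G) = (Z @ G) @ (Y @ G)" and V_GG: "V = (Y @ G) @ (Z @ G)"
    using M1 M2 V_eq by (metis append.assoc)+
  moreover have "Y @ G \<noteq> []" "Z @ G \<noteq> []"
    using lengths mn by auto
  moreover have "cyclically_reduced ((Y @ G) @ (Z @ G))"
    using cyclically_reduced_R_set[OF cyclically_reduced_W V(1)] V_GG by simp
  ultimately have "periodic V"
    using periodic_if_commute[of "Y @ G" "Z @ G"] by metis
  then show ?thesis
    using periodic_R_set[OF cyclically_reduced_W V(1)] by blast
qed

lemma inverse_rotation_prefix_absurd_of_le: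
  assumes V: "V \<in> R_set W" "prefix M V" and "M \<noteq> []"
    and rot: "prefix M (word_inv (drop d V @ take d V))" and d: "length M \<le> d" "d \<le> length V"
  shows False
proof -
  have "segment V d (d - length M) = word_inv (drop (d - length M) (take d V))"
    using reduced_R_set_W[OF V(1)] by (simp add: segment_backward)
  also have "\<dots> = take (length M) (word_inv (drop d V @ take d V))"
    using d by (simp add: take_word_inv)
  also have "\<dots> = M"
    using rot by (rule prefix_eq_take)
  finally have "segment V d (d - length M) = M" .
  moreover have "d \<le> length V" "d - length M \<le> length V"
    using d by simp_all
  ultimately have "d - length M = length M" "d = 0"
    using max_ascent_segment_unique[OF V] by blast+
  then show False
    using \<open>M \<noteq> []\<close> by simp
qed

lemma inverse_rotation_prefix_absurd:
  assumes V: "V \<in> R_set W" "prefix M V" and "M \<noteq> []"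
    and rot: "prefix M (word_inv (drop d V @ take d V))" and d: "d \<le> length V"
  shows False
proof -
  consider "d = 0" | "length M \<le> d" | "0 < d" "d < length M"
    by linarith
  then show False
  proof cases
    case 1
    then have "prefix M (word_inv (drop (length V) V @ take (length V) V))"
      using rot by simp
    then show False
      using inverse_rotation_prefix_absurd_of_le[OF V \<open>M \<noteq> []\<close>] prefix_length_le[OF V(2)] by blast
  next
    case 2
    then show False
      using inverse_rotation_prefix_absurd_of_le[OF V \<open>M \<noteq> []\<close> rot _ d] by blast
  next
    case 3
    have "take d V = take d M"
      by (rule take_prefix[OF V(2)]) (use 3 in simp)
    also have "\<dots> = take d (word_inv (drop d V @ take d V))"
      by (rule take_prefix[OF rot, symmetric]) (use 3 in simp)
    also have "\<dots> = word_inv (take d V)"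
      using d by simp
    finally show False
      using word_inv_neq_self[of "take d V"] reduced_take reduced_R_set_W[OF V(1)] 3 d by force
  qed
qed

lemma prefix_max_ascent_unique:
  assumes "\<not> periodic W" "M \<noteq> []" and V1: "V1 \<in> R_set W" "prefix M V1"
    and V2: "V2 \<in> R_set W" "prefix M V2"
  shows "V1 = V2"
proof -
  define n where "n = length V1"
  have "length M \<le> n"
    using prefix_length_le[OF V1(2)] by (simp add: n_def)
  with \<open>M \<noteq> []\<close> have "0 < n"
    using length_greater_0_conv by fastforce
  obtain d where "V2 = rotate d V1 \<or> V2 = word_inv (rotate d V1)"
    using R_set_eq[OF V1(1)] V2(1) mem_R_set_iff by blast
  moreover define e where "e = d mod n"
  ultimately have e: "e < n" "V2 = drop e V1 @ take e V1 \<or> V2 = word_inv (drop e V1 @ take e V1)"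
    using \<open>0 < n\<close> by (simp_all add: rotate_drop_take n_def)
  then show ?thesis
  proof (elim disjE)
    assume V2_eq: "V2 = drop e V1 @ take e V1"
    consider "e + length M \<le> n" | "length M \<le> e" | "e < length M" "n < e + length M"
      by linarith
    then show ?thesis
    proof cases
      case 1
      then have "e = 0"
        using rotation_prefix_max_ascent_trivial[OF V1, of e] V2(2) V2_eq by (simp add: n_def)
      then show ?thesis
        using V2_eq by simp
    next
      case 2
      have V1_eq: "V1 = drop (n - e) V2 @ take (n - e) V2"
        using V2_eq e by (simp add: n_def)
      have "length V2 = n"
        using V2_eq e(1) by (simp add: n_def)
      then have "n - e + length M \<le> length V2"
        using 2 e(1) by linarith
      moreover have "prefix M (drop (n - e) V2 @ take (n - e) V2)"
        using V1(2) V1_eq by simp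
      ultimately have "n - e = 0"
        using rotation_prefix_max_ascent_trivial[OF V2] by blast
      then show ?thesis
        using V1_eq by simp
    next
      case 3
      then have "periodic W"
        using rotation_overlap_periodic[OF V1] V2(2) V2_eq by (simp add: n_def)
      with \<open>\<not> periodic W\<close> show ?thesis
        by contradiction
    qed
  next
    assume "V2 = word_inv (drop e V1 @ take e V1)"
    then have "prefix M (word_inv (drop e V1 @ take e V1))"
      using V2(2) by simp
    moreover have "e \<le> length V1"
      using e(1) by (simp add: n_def)
    ultimately show ?thesis
      using inverse_rotation_prefix_absurd[OF V1 \<open>M \<noteq> []\<close>] by blast
  qed
qed

lemma max_ascent_nonempty:
  assumes "W \<noteq> []"
  shows "M \<noteq> []"
proof -
  define x where "x = hd W"
  have "sublist [x] W"
    using assms unfolding sublist_def x_def by (intro exI[of _ "[]"] exI[of _ "tl W"]) simp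
  then have "sublist [inv_letter x] (word_inv W)"
    using sublist_word_inv by fastforce
  obtain A where "[] \<prec> A" "ascent lt A" "\<exists>V\<in>R_set W. sublist A V"
  proof (cases "[] \<prec> [x]")
    case True
    then show ?thesis
      using that ascent_singleton mem_R_set_self \<open>sublist [x] W\<close> by blast
  next
    case False
    then have "[x] \<prec> []"
      using lt_total[of "[]" "[x]"] by simp
    then have "fmult [inv_letter x] [x] \<prec> fmult [inv_letter x] []"
      using lt_mult_left[of "[x]" "[]" "[inv_letter x]"] by simp
    then have "[] \<prec> [inv_letter x]"
      using fmult_word_inv_left[of "[x]"] by (simp add: fmult_Nil_right)
    then show ?thesis
      using that ascent_singleton word_inv_mem_R_set[OF mem_R_set_self]
        \<open>sublist [inv_letter x] (word_inv W)\<close> by blast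
  qed
  then have "A = M \<or> A \<prec> M"
    using ascent_le_max_ascent by blast
  moreover have "reduced A"
    using \<open>\<exists>V\<in>R_set W. sublist A V\<close> reduced_R_set_W reduced_sublist by blast
  ultimately show ?thesis
    using \<open>[] \<prec> A\<close> lt_asym lt_irrefl reduced_Nil by blast
qed

lemma max_ascent_prefix_exists: "\<exists>V\<in>R_set W. prefix M V"
proof -
  obtain V S U where "V \<in> R_set W" "V = S @ M @ U"
    using is_max_ascent_M unfolding is_max_ascent_def subword_def by blast
  then have "M @ U @ S \<in> R_set W"
    using rotate_mem_R_set[of V W "length S"] by (simp add: rotate_append)
  then show ?thesis
    by (auto intro: prefixI)
qed

end

theorem proposition2p6:
  fixes lt :: "'a word \<Rightarrow> 'a word \<Rightarrow> bool" and W :: "'a word"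
  assumes "bi_order lt"
    and "cyclically_reduced W"
    and "\<not> periodic W"
  shows "(\<exists>M. is_max_ascent lt W M) \<and>
         (\<forall>M. is_max_ascent lt W M \<longrightarrow> uniquely_positioned M W)"
proof (intro conjI allI impI)
  interpret bi_ordered lt
    using assms(1) by unfold_locales
  show "\<exists>M. is_max_ascent lt W M"
    using assms(2) by (rule max_ascent_exists)
next
  fix M
  assume "is_max_ascent lt W M"
  then interpret max_ascent lt W M
    using assms by unfold_locales
  have "W \<noteq> []"
    using assms(3) periodic_Nil by blast
  then have "M \<noteq> []"
    by (rule max_ascent_nonempty)
  then show "uniquely_positioned M W"
    unfolding uniquely_positioned_def
    using max_ascent_prefix_exists prefix_max_ascent_unique[OF assms(3)] reduced_max_ascent by blast
qed

end
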